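(* Let $G$ be a proper subdomain of $\mathbb{R}^n$, let $c\ge 1$, and let $x,y\in G$. Put $$W(x,y)=\log\Big(1+2c\sinh\frac{j_G(x,y)}{2}\Big),\quad L=\frac12+\frac{\log c}{1+j_G(x,y)},\quad U=\frac{j_G(x,y)+(2c+1)}{2(1+j_G(x,y))}.$$ Then $$L\,j_G(x,y)\le W(x,y)\le U\,j_G(x,y).$$
   Context: For $x\in G$, $d_G(x)=\operatorname{dist}(x,\partial G)$. The distance ratio metric is $j_G(x,y)=\log\Big(1+\frac{|x-y|}{\min\{d_G(x),d_G(y)\}}\Big)$ for $x,y\in G$. *)

theory Defs
  imports "HOL-Analysis.Analysis"
begin

definition dG :: "'a::euclidean_space set \<Rightarrow> 'a \<Rightarrow> real" where
  "dG G x = infdist x (frontier G)"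

definition jG :: "'a::euclidean_space set \<Rightarrow> 'a \<Rightarrow> 'a \<Rightarrow> real" where
  "jG G x y = ln (1 + dist x y / min (dG G x) (dG G y))"

end

theory Submission
  imports Defs
begin

text \<open>
  Only \<open>j\<^sub>G(x, y) \<ge> 0\<close> is used: with \<open>t = j\<^sub>G(x, y)\<close> one has \<open>L t = t/2 + t ln c / (1 + t)\<close>
  and \<open>U t = t/2 + c t / (1 + t)\<close>, and both bounds are inequalities about the real function
  \<open>t \<mapsto> ln (1 + 2c sinh (t/2))\<close> on \<open>t \<ge> 0\<close>.
  For the lower bound, concavity of \<open>ln\<close> gives \<open>t ln c / (1 + t) \<le> ln ((1 + c t) / (1 + t))\<close>,
  and \<open>exp (t/2) (1 + c t) / (1 + t) \<le> 1 + 2c sinh (t/2)\<close> follows from \<open>exp t \<ge> 1 + t\<close>.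
  For the upper bound, \<open>ln\<close> is estimated by its tangent at \<open>a = 2 sinh (t/2) (1 + t) / t\<close>,
  the point where \<open>c \<mapsto> ln (1 + 2c sinh (t/2))\<close> has the slope \<open>t / (1 + t)\<close> of \<open>c \<mapsto> U t\<close>.
  What remains is free of \<open>c\<close> and reduces to \<open>1 - exp (-t) \<le> t (1 + 2t) / (1 + t)\<^sup>2\<close>,
  which holds because the difference of the two sides is nondecreasing.
\<close>

lemma exp_lower_Taylor_quadratic:
  fixes x :: real
  assumes "0 \<le> x"
  shows "1 + x + x\<^sup>2 / 2 \<le> exp x"
proof -
  obtain \<theta> where "exp x = (\<Sum>m<3. x ^ m / fact m) + exp \<theta> / fact 3 * x ^ 3"
    using Maclaurin_exp_le[of x 3] by blast
  moreover have "0 \<le> exp \<theta> / fact 3 * x ^ 3" using assms by simp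
  ultimately show ?thesis by (simp add: eval_nat_numeral)
qed

lemma one_minus_exp_neg_le:
  fixes t :: real
  assumes "0 \<le> t"
  shows "1 - exp (- t) \<le> t * (1 + 2 * t) / (1 + t)\<^sup>2"
proof -
  let ?f = "\<lambda>x::real. x * (1 + 2 * x) / (1 + x)\<^sup>2 + exp (- x)"
  have "?f 0 \<le> ?f t"
  proof (rule DERIV_nonneg_imp_nondecreasing[OF assms])
    fix x :: real
    assume x: "0 \<le> x"
    have "1 + x \<noteq> 0" using x by simp
    then have "(?f has_real_derivative (1 + 3 * x) / (1 + x) ^ 3 - exp (- x)) (at x)"
      by (auto intro!: derivative_eq_intros)
        (simp add: divide_simps, simp add: algebra_simps eval_nat_numeral)
    moreover have "exp (- x) \<le> (1 + 3 * x) / (1 + x) ^ 3"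
    proof -
      have "(1 + x + x\<^sup>2 / 2) * (1 + 3 * x) = (1 + x) ^ 3 + x * (1 + x / 2 + x\<^sup>2 / 2)"
        by (simp add: field_simps power2_eq_square power3_eq_cube)
      then have "(1 + x) ^ 3 \<le> (1 + x + x\<^sup>2 / 2) * (1 + 3 * x)"
        using x by simp
      also have "\<dots> \<le> exp x * (1 + 3 * x)"
        using x exp_lower_Taylor_quadratic[OF x] by (intro mult_right_mono) auto
      finally show ?thesis using x by (simp add: exp_minus field_simps)
    qed
    ultimately show "\<exists>y. (?f has_real_derivative y) (at x) \<and> 0 \<le> y" by auto
  qed
  then show ?thesis by simp
qed

lemma mult_ln_le_ln_convex_comb:
  fixes a x :: real
  assumes "0 < x" and "0 \<le> a" and "a \<le> 1"
  shows "a * ln x \<le> ln ((1 - a) + a * x)"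
  using concave_onD[OF ln_concave, of a 1 x] assms by simp

lemma ln_le_tangent:
  fixes a y :: real
  assumes "0 < a" and "0 < y"
  shows "ln y \<le> ln a + y / a - 1"
  using ln_le_minus_one[of "y / a"] assms by (simp add: ln_div)

lemma two_sinh_half_eq: "2 * sinh (t / 2) = exp (t / 2) * (1 - exp (- t))" for t :: real
proof -
  have "exp (t / 2) * exp (- t) = exp (- (t / 2))" by (simp flip: exp_add)
  then show ?thesis by (simp add: sinh_field_def right_diff_distrib)
qed

lemma exp_half_mult_le_one_plus_sinh:
  fixes t c :: real
  assumes t: "0 \<le> t" and c: "1 \<le> c"
  shows "exp (t / 2) * ((1 + c * t) / (1 + t)) \<le> 1 + 2 * c * sinh (t / 2)"
proof -
  define u where "u = exp (t / 2)"
  have u: "1 \<le> u" using t by (simp add: u_def)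
  have "u * u = exp t" by (simp add: u_def flip: exp_add)
  then have uu: "1 + t \<le> u * u" by simp
  have sinh: "2 * c * sinh (t / 2) = c * (u - 1 / u)"
    by (simp add: u_def sinh_field_def exp_minus field_simps)
  have gap: "0 \<le> u - (1 + t) / u" using uu u by (simp add: field_simps)
  have "(1 + t) - u + (u - (1 + t) / u) \<le> (1 + t) - u + c * (u - (1 + t) / u)"
    using mult_right_mono[OF c gap] by simp
  moreover have "(1 + t) - u + (u - (1 + t) / u) = (1 + t) * (1 - 1 / u)"
    using u by (simp add: field_simps)
  moreover have "0 \<le> (1 + t) * (1 - 1 / u)" using t u by simp
  moreover have "(1 + t) * (1 + c * (u - 1 / u)) - u * (1 + c * t)
      = (1 + t) - u + c * (u - (1 + t) / u)"
    using u by (simp add: field_simps)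
  ultimately have "u * (1 + c * t) \<le> (1 + t) * (1 + c * (u - 1 / u))" by linarith
  then have "u * (1 + c * t) / (1 + t) \<le> 1 + c * (u - 1 / u)"
    using t by (simp add: pos_divide_le_eq mult.commute)
  then show ?thesis unfolding sinh u_def[symmetric] by simp
qed

lemma ln_one_plus_sinh_lower:
  fixes t c :: real
  assumes t: "0 \<le> t" and c: "1 \<le> c"
  shows "t / 2 + t * ln c / (1 + t) \<le> ln (1 + 2 * c * sinh (t / 2))"
proof -
  have ratio_pos: "0 < (1 + c * t) / (1 + t)" using t c by (simp add: add_pos_nonneg)
  have "t / (1 + t) * ln c \<le> ln ((1 - t / (1 + t)) + t / (1 + t) * c)"
    using c t by (intro mult_ln_le_ln_convex_comb) auto
  also have "(1 - t / (1 + t)) + t / (1 + t) * c = (1 + c * t) / (1 + t)"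
    using t by (simp add: field_simps)
  finally have "t / 2 + t * ln c / (1 + t) \<le> ln (exp (t / 2)) + ln ((1 + c * t) / (1 + t))"
    by simp
  also have "\<dots> = ln (exp (t / 2) * ((1 + c * t) / (1 + t)))"
    using ratio_pos by (subst ln_mult) auto
  also have "\<dots> \<le> ln (1 + 2 * c * sinh (t / 2))"
    by (rule ln_mono[OF exp_half_mult_le_one_plus_sinh[OF t c]
                        mult_pos_pos[OF exp_gt_zero ratio_pos]])
  finally show ?thesis .
qed

lemma ln_sinh_ratio_le:
  fixes t :: real
  assumes t: "0 < t"
  shows "ln (2 * sinh (t / 2) * (1 + t) / t) \<le> t / 2 + t / (1 + t)"
proof -
  define v where "v = 1 - exp (- t)"
  have v: "0 < v * (1 + t) / t" using t by (simp add: v_def)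
  have "2 * sinh (t / 2) * (1 + t) / t = exp (t / 2) * (v * (1 + t) / t)"
    by (simp add: two_sinh_half_eq v_def)
  then have split: "ln (2 * sinh (t / 2) * (1 + t) / t) = t / 2 + ln (v * (1 + t) / t)"
    using v by (simp only:) (subst ln_mult, auto)
  have "v * ((1 + t) / t) \<le> t * (1 + 2 * t) / (1 + t)\<^sup>2 * ((1 + t) / t)"
    using one_minus_exp_neg_le[of t] t by (intro mult_right_mono) (auto simp: v_def)
  also have "\<dots> = (1 + 2 * t) / (1 + t)"
    using t by (simp add: power2_eq_square)
  finally have "v * (1 + t) / t \<le> (1 + 2 * t) / (1 + t)" by simp
  moreover have "(1 + 2 * t) / (1 + t) - 1 = t / (1 + t)"
    using t by (simp add: field_simps)
  ultimately show ?thesis using split ln_le_minus_one[OF v] by linarith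
qed

lemma ln_one_plus_sinh_upper:
  fixes t c :: real
  assumes t: "0 \<le> t" and c: "0 \<le> c"
  shows "ln (1 + 2 * c * sinh (t / 2)) \<le> t / 2 + c * t / (1 + t)"
proof (cases "t = 0")
  case False
  then have t: "0 < t" using t by simp
  define s where "s = 2 * sinh (t / 2)"
  define a where "a = s * (1 + t) / t"
  have ts: "t \<le> s"
    using real_le_x_sinh[of "t / 2"] t by (simp add: s_def sinh_field_def exp_minus)
  have s: "0 < s" using t ts by simp
  have a: "0 < a" using s t by (simp add: a_def)
  have tangent: "ln (1 + c * s) \<le> ln a + (1 + c * s) / a - 1"
    using a s c by (intro ln_le_tangent) (auto simp: add_pos_nonneg)
  have "s * (1 + t) \<noteq> 0" using s t by simp
  then have slope: "(1 + c * s) / a = t / (s * (1 + t)) + c * t / (1 + t)"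
    using s t by (simp add: a_def divide_simps) (simp add: algebra_simps)
  have "t / s \<le> 1" using s ts by simp
  then have small: "t / (s * (1 + t)) \<le> 1 / (1 + t)"
    using t by (simp add: divide_right_mono flip: divide_divide_eq_left)
  have ln_a: "ln a \<le> t / 2 + t / (1 + t)"
    using ln_sinh_ratio_le[OF t] by (simp add: a_def s_def)
  have "t / (1 + t) + 1 / (1 + t) = 1"
    using t by (simp add: add_divide_distrib[symmetric])
  then have "ln (1 + c * s) \<le> t / 2 + c * t / (1 + t)"
    using tangent slope small ln_a by linarith
  moreover have "2 * c * sinh (t / 2) = c * s" by (simp add: s_def)
  ultimately show ?thesis by (simp only:)
qed simp

lemma jG_nonneg: "0 \<le> jG G x y"
  by (simp add: jG_def dG_def infdist_nonneg)

theorem theorem3p10: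
  fixes G :: "('a::euclidean_space) set" and c :: real and x y :: 'a
  assumes "open G" and "connected G" and "G \<noteq> {}" and "G \<noteq> UNIV"
    and "c \<ge> 1" and "x \<in> G" and "y \<in> G"
  shows "(1/2 + ln c / (1 + jG G x y)) * jG G x y \<le> ln (1 + 2 * c * sinh (jG G x y / 2))
       \<and> ln (1 + 2 * c * sinh (jG G x y / 2)) \<le> (jG G x y + (2 * c + 1)) / (2 * (1 + jG G x y)) * jG G x y"
proof -
  define j where "j = jG G x y"
  have j: "0 \<le> j" by (simp add: j_def jG_nonneg)
  have "(1/2 + ln c / (1 + j)) * j = j / 2 + j * ln c / (1 + j)"
    using j by (simp add: field_simps)
  moreover have "(j + (2 * c + 1)) / (2 * (1 + j)) * j = j / 2 + c * j / (1 + j)"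
    using j by (simp add: field_simps)
  ultimately show ?thesis
    using ln_one_plus_sinh_lower[OF j \<open>c \<ge> 1\<close>] ln_one_plus_sinh_upper[OF j] \<open>c \<ge> 1\<close>
    unfolding j_def[symmetric] by simp
qed

end
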